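(* For every integer $r\ge 2$ the following hold: (a) every point of $R_r$ lies above $\ell_{r-1}$; (b) every point of $L_r$ lies below $\ell_{r-1}'$; (c) no point of $L_{r-1}$ lies below $\ell_{r-1}$; (d) no point of $L_{r-1}'$ lies below $\ell_{r-1}'$; (e) no point of $R_{r-1}$ lies above $\ell_{r-1}$; (f) no point of $R_{r-1}'$ lies above $\ell_{r-1}'$.
   Context: Define finite sets $P_r\subset\mathbb{Z}^2$ for integers $r\ge 0$ recursively: $P_0:=\{(0,0)\}$; for $r\ge 1$, $L_r:=P_{r-1}$, $R_r:=\{(x+\delta_r,\,y+\delta_r'):(x,y)\in L_r\}$ and $P_r:=L_r\cup R_r$, where $\delta_r:=3\cdot 4^{r-1}$ and $\delta_r':=(3r+1)\cdot 4^{r-1}$. For $r\ge 1$, let $\ell_r$ be the straight line through the rightmost point (largest $x$-coordinate) of $L_r$ and the leftmost point (smallest $x$-coordinate) of $R_r$. For $r\ge 2$, $R_r$ is the translate of $P_{r-1}=L_{r-1}\cup R_{r-1}$ by the vector $(\delta_r,\delta_r')$; let $L_{r-1}'$, $R_{r-1}'$ and $\ell_{r-1}'$ denote the translates of $L_{r-1}$, $R_{r-1}$ and of the line $\ell_{r-1}$, respectively, by $(\delta_r,\delta_r')$ (so $R_r=L_{r-1}'\cup R_{r-1}'$). *)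

theory Defs
  imports Main Complex_Main
begin

type_synonym pt = "int \<times> int"

definition delta :: "nat \<Rightarrow> int" where
  "delta r = 3 * 4 ^ (r - 1)"

definition delta' :: "nat \<Rightarrow> int" where
  "delta' r = (3 * int r + 1) * 4 ^ (r - 1)"

definition shift :: "pt \<Rightarrow> pt \<Rightarrow> pt" where
  "shift v p = (fst p + fst v, snd p + snd v)"

definition vec :: "nat \<Rightarrow> pt" where
  "vec r = (delta r, delta' r)"

fun P :: "nat \<Rightarrow> pt set" where
  "P 0 = {(0, 0)}"
| "P (Suc r) = P r \<union> shift (vec (Suc r)) ` P r"

definition L :: "nat \<Rightarrow> pt set" where
  "L r = P (r - 1)"

definition R :: "nat \<Rightarrow> pt set" where
  "R r = shift (vec r) ` L r"

definition rightmost :: "pt set \<Rightarrow> pt" where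
  "rightmost A = (ARG_MAX fst p. p \<in> A)"

definition leftmost :: "pt set \<Rightarrow> pt" where
  "leftmost A = (ARG_MIN fst p. p \<in> A)"

text \<open>A (non-vertical) line is represented by two points on it.\<close>
type_synonym line = "pt \<times> pt"

definition line_at :: "line \<Rightarrow> real \<Rightarrow> real" where
  "line_at l x = (let (a, b) = l in
     real_of_int (snd a) + real_of_int (snd b - snd a) / real_of_int (fst b - fst a) * (x - real_of_int (fst a)))"

definition above :: "pt \<Rightarrow> line \<Rightarrow> bool" where
  "above p l \<longleftrightarrow> real_of_int (snd p) > line_at l (real_of_int (fst p))"

definition below :: "pt \<Rightarrow> line \<Rightarrow> bool" where
  "below p l \<longleftrightarrow> real_of_int (snd p) < line_at l (real_of_int (fst p))"

definition ell :: "nat \<Rightarrow> line" where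
  "ell r = (rightmost (L r), leftmost (R r))"

definition L' :: "nat \<Rightarrow> pt set" where
  "L' r = shift (vec r) ` L (r - 1)"

definition R' :: "nat \<Rightarrow> pt set" where
  "R' r = shift (vec r) ` R (r - 1)"

definition ell' :: "nat \<Rightarrow> line" where
  "ell' r = (shift (vec r) (fst (ell (r - 1))), shift (vec r) (snd (ell (r - 1))))"

end

theory Submission
  imports Defs
begin

text \<open>
  For a slope \<open>s\<close> measure a point by its height \<open>y - s x\<close>; a point lies above (below) a line of
  slope \<open>s\<close> iff its height exceeds (is less than) that of a point on the line, and heights are
  additive under translation. The line \<open>\<ell>\<^sub>n\<^sub>+\<^sub>1\<close> joins the corner \<open>(4\<^sup>n - 1, n 4\<^sup>n)\<close> of \<open>P\<^sub>n\<close> to the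
  translation vector \<open>v\<^sub>n\<^sub>+\<^sub>1\<close>, and its slope \<open>s\<close> is at least \<open>n + 1/3\<close>, so every translation vector
  \<open>v\<^sub>j\<close>, \<open>j \<le> n\<close>, has nonpositive height. Hence \<open>P\<^sub>n\<close> lies in the strip between the parallel lines
  through the origin and through the corner, which gives (c) and (e); (d) and (f) are their
  translates. Then \<open>P\<^sub>n\<^sub>+\<^sub>1\<close> lies in the strip of twice that width below the origin line, and
  since \<open>s < n + 2\<close> the vector \<open>v\<^sub>n\<^sub>+\<^sub>2\<close> has height larger than the width of the narrow strip; this
  separates \<open>L\<^sub>n\<^sub>+\<^sub>2\<close> from \<open>R\<^sub>n\<^sub>+\<^sub>2\<close> as claimed in (a) and (b).
\<close>

lemma shift_simps [simp]:
  "fst (shift v p) = fst p + fst v"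
  "snd (shift v p) = snd p + snd v"
  by (simp_all add: shift_def)

lemma shift_origin [simp]: "shift v (0, 0) = v"
  by (simp add: shift_def)

lemma vec_Suc: "vec (Suc k) = (3 * 4 ^ k, (3 * int k + 4) * 4 ^ k)"
  by (simp add: vec_def delta_def delta'_def algebra_simps)

definition corner :: "nat \<Rightarrow> pt" where
  "corner k = (4 ^ k - 1, int k * 4 ^ k)"

lemma corner_Suc: "corner (Suc k) = shift (vec (Suc k)) (corner k)"
  by (simp add: corner_def shift_def vec_Suc algebra_simps)

lemma corner_mem_P: "corner k \<in> P k"
  by (induction k) (simp_all add: corner_def[of 0] corner_Suc)

lemma origin_mem_P: "(0, 0) \<in> P k"
  by (induction k) auto

lemma P_fst_bounds:
  assumes "p \<in> P k"
  shows "0 \<le> fst p \<and> fst p \<le> 4 ^ k - 1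
    \<and> (fst p = 0 \<longrightarrow> p = (0, 0)) \<and> (fst p = 4 ^ k - 1 \<longrightarrow> p = corner k)"
  using assms
proof (induction k arbitrary: p)
  case 0
  then show ?case by (simp add: corner_def)
next
  case (Suc k)
  have pos: "(0::int) < 4 ^ k" by simp
  from Suc.prems consider "p \<in> P k" | q where "q \<in> P k" "p = shift (vec (Suc k)) q"
    by auto
  then show ?case
  proof cases
    case 1
    with Suc.IH[OF 1] pos show ?thesis by auto
  next
    case 2
    with Suc.IH[OF 2(1)] pos show ?thesis by (auto simp: vec_Suc corner_Suc)
  qed
qed

lemma rightmost_P: "rightmost (P k) = corner k"
  unfolding rightmost_def
proof (rule arg_maxI)
  show "corner k \<in> P k" by (rule corner_mem_P)
  show "\<not> fst p > fst (corner k)" if "p \<in> P k" for p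
    using P_fst_bounds[OF that] by (simp add: corner_def)
  show "p = corner k" if "p \<in> P k" "\<forall>q. q \<in> P k \<longrightarrow> \<not> fst q > fst p" for p
    using that corner_mem_P P_fst_bounds[OF that(1)] by (force simp: corner_def)
qed

lemma leftmost_shift_P: "leftmost (shift v ` P k) = v"
  unfolding leftmost_def
proof (rule arg_minI)
  show "v \<in> shift v ` P k"
    using origin_mem_P by (metis image_eqI shift_origin)
  show "\<not> fst p < fst v" if "p \<in> shift v ` P k" for p
    using that P_fst_bounds by fastforce
  show "p = v"
    if mem: "p \<in> shift v ` P k" and min: "\<forall>q. q \<in> shift v ` P k \<longrightarrow> \<not> fst q < fst p" for p
  proof -
    obtain q where q: "q \<in> P k" "p = shift v q" using mem by blast
    have "\<not> fst v < fst p"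
      using min origin_mem_P by (metis image_eqI shift_origin)
    with q have "fst q = 0" using P_fst_bounds[OF q(1)] by simp
    with q show "p = v" using P_fst_bounds[OF q(1)] by simp
  qed
qed

lemma ell_Suc: "ell (Suc n) = (corner n, vec (Suc n))"
  by (simp add: ell_def L_def R_def rightmost_P leftmost_shift_P)

definition height :: "real \<Rightarrow> pt \<Rightarrow> real" where
  "height s p = real_of_int (snd p) - s * real_of_int (fst p)"

definition slope :: "pt \<Rightarrow> pt \<Rightarrow> real" where
  "slope a b = real_of_int (snd b - snd a) / real_of_int (fst b - fst a)"

lemma height_shift: "height s (shift v p) = height s p + height s v"
  by (simp add: height_def algebra_simps)

lemma height_vec_Suc: "height s (vec (Suc k)) = (3 * real k + 4 - 3 * s) * 4 ^ k"
  by (simp add: height_def vec_Suc algebra_simps)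

lemma height_slope_eq: "fst a \<noteq> fst b \<Longrightarrow> height (slope a b) b = height (slope a b) a"
  by (simp add: height_def slope_def field_simps)

lemma line_at_slope: "line_at (a, b) x = real_of_int (snd a) + slope a b * (x - real_of_int (fst a))"
  by (simp add: line_at_def slope_def)

lemma above_iff_height: "above p (a, b) \<longleftrightarrow> height (slope a b) a < height (slope a b) p"
  by (simp add: above_def line_at_slope height_def algebra_simps)

lemma below_iff_height: "below p (a, b) \<longleftrightarrow> height (slope a b) p < height (slope a b) a"
  by (simp add: below_def line_at_slope height_def algebra_simps)

lemma slope_shift [simp]: "slope (shift v a) (shift v b) = slope a b"
  by (simp add: slope_def)

lemma above_shift_iff: "above (shift v p) (shift v a, shift v b) \<longleftrightarrow> above p (a, b)"
  by (simp add: above_iff_height height_shift)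

lemma below_shift_iff: "below (shift v p) (shift v a, shift v b) \<longleftrightarrow> below p (a, b)"
  by (simp add: below_iff_height height_shift)

lemma P_height_bounds:
  assumes "3 * real k + 1 \<le> 3 * s" and "p \<in> P k"
  shows "height s (corner k) \<le> height s p \<and> height s p \<le> 0"
  using assms
proof (induction k arbitrary: p)
  case 0
  then show ?case by (simp add: corner_def height_def)
next
  case (Suc k)
  have vec: "height s (vec (Suc k)) \<le> 0"
    unfolding height_vec_Suc using Suc.prems(1) by (intro mult_nonpos_nonneg) auto
  have IH: "height s (corner k) \<le> height s q \<and> height s q \<le> 0" if "q \<in> P k" for q
    using Suc.IH Suc.prems(1) that by auto
  from Suc.prems(2) consider "p \<in> P k" | q where "q \<in> P k" "p = shift (vec (Suc k)) q"
    by auto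
  then show ?case
  proof cases
    case 1
    with IH[OF 1] vec show ?thesis by (simp add: corner_Suc height_shift)
  next
    case 2
    with IH[OF 2(1)] vec show ?thesis by (simp add: corner_Suc height_shift)
  qed
qed

abbreviation ell_slope :: "nat \<Rightarrow> real" where
  "ell_slope n \<equiv> slope (corner n) (vec (Suc n))"

lemma ell_slope_eq: "ell_slope n = (2 * real n + 4) * 4 ^ n / (2 * 4 ^ n + 1)"
  by (simp add: slope_def corner_def vec_Suc algebra_simps)

lemma ell_slope_bounds: "3 * real n + 1 \<le> 3 * ell_slope n" "ell_slope n < real n + 2"
proof -
  have pos: "(0::real) < 2 * 4 ^ n + 1" by (simp add: add_pos_pos)
  have "real n + 1 \<le> 4 ^ n"
    by (induction n) auto
  then have "(3 * real n + 1) * (2 * 4 ^ n + 1) \<le> 3 * ((2 * real n + 4) * 4 ^ n)"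
    and "(2 * real n + 4) * 4 ^ n < (real n + 2) * (2 * 4 ^ n + 1)"
    by (simp_all add: algebra_simps)
  with pos show "3 * real n + 1 \<le> 3 * ell_slope n" "ell_slope n < real n + 2"
    by (simp_all add: ell_slope_eq le_divide_eq divide_less_eq)
qed

lemma height_vec_ell: "height (ell_slope n) (vec (Suc n)) = height (ell_slope n) (corner n)"
proof (rule height_slope_eq)
  have "(0::int) < 4 ^ n" by simp
  then show "fst (corner n) \<noteq> fst (vec (Suc n))"
    unfolding corner_def vec_Suc fst_conv by linarith
qed

lemma corner_height_nonpos: "height (ell_slope n) (corner n) \<le> 0"
  using P_height_bounds[OF ell_slope_bounds(1) corner_mem_P] by simp

lemma P_Suc_height_bounds:
  assumes "p \<in> P (Suc n)"
  shows "2 * height (ell_slope n) (corner n) \<le> height (ell_slope n) p \<and> height (ell_slope n) p \<le> 0"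
proof -
  note bounds = P_height_bounds[OF ell_slope_bounds(1)]
  from assms consider "p \<in> P n" | q where "q \<in> P n" "p = shift (vec (Suc n)) q"
    by auto
  then show ?thesis
    by cases (use bounds corner_height_nonpos height_vec_ell in \<open>fastforce simp: height_shift\<close>)+
qed

lemma height_vec_gap:
  "0 < height (ell_slope n) (corner n) + height (ell_slope n) (vec (Suc (Suc n)))"
proof -
  let ?s = "ell_slope n"
  have "height ?s (corner n) + height ?s (vec (Suc (Suc n))) = 4 ^ n * (15 * real n + 32 - 15 * ?s)"
    by (simp add: height_vec_ell[symmetric] height_vec_Suc algebra_simps)
  also have "\<dots> > 0"
    using ell_slope_bounds(2)[of n] by simp
  finally show ?thesis .
qed

lemma L_not_below_ell:
  assumes "p \<in> L (Suc n)"
  shows "\<not> below p (ell (Suc n))"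
  using assms P_height_bounds[OF ell_slope_bounds(1), of p n]
  by (simp add: L_def ell_Suc below_iff_height)

lemma R_not_above_ell:
  assumes "p \<in> R (Suc n)"
  shows "\<not> above p (ell (Suc n))"
proof -
  obtain q where q: "q \<in> P n" "p = shift (vec (Suc n)) q"
    using assms by (auto simp: R_def L_def)
  then show ?thesis
    using P_height_bounds[OF ell_slope_bounds(1) q(1)]
    by (simp add: ell_Suc above_iff_height height_shift height_vec_ell)
qed

lemma R_Suc_above_ell:
  assumes "p \<in> R (Suc (Suc n))"
  shows "above p (ell (Suc n))"
proof -
  obtain q where q: "q \<in> P (Suc n)" "p = shift (vec (Suc (Suc n))) q"
    using assms by (auto simp: R_def L_def)
  then show ?thesis
    using P_Suc_height_bounds[OF q(1)] height_vec_gap[of n]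
    by (simp add: ell_Suc above_iff_height height_shift)
qed

lemma L_Suc_below_ell':
  assumes "p \<in> L (Suc (Suc n))"
  shows "below p (ell' (Suc (Suc n)))"
  using assms P_Suc_height_bounds[of p n] height_vec_gap[of n]
  by (simp add: L_def ell'_def ell_Suc below_iff_height height_shift)

lemma L'_not_below_ell':
  assumes "p \<in> L' (Suc (Suc n))"
  shows "\<not> below p (ell' (Suc (Suc n)))"
proof -
  obtain q where "q \<in> L (Suc n)" "p = shift (vec (Suc (Suc n))) q"
    using assms by (auto simp: L'_def)
  then show ?thesis
    using L_not_below_ell[of q n] by (simp add: ell'_def ell_Suc below_shift_iff)
qed

lemma R'_not_above_ell':
  assumes "p \<in> R' (Suc (Suc n))"
  shows "\<not> above p (ell' (Suc (Suc n)))"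
proof -
  obtain q where "q \<in> R (Suc n)" "p = shift (vec (Suc (Suc n))) q"
    using assms by (auto simp: R'_def)
  then show ?thesis
    using R_not_above_ell[of q n] by (simp add: ell'_def ell_Suc above_shift_iff)
qed

theorem lemma3:
  fixes r :: nat
  assumes "r \<ge> 2"
  shows "(\<forall>p\<in>R r. above p (ell (r - 1)))
       \<and> (\<forall>p\<in>L r. below p (ell' r))
       \<and> (\<forall>p\<in>L (r - 1). \<not> below p (ell (r - 1)))
       \<and> (\<forall>p\<in>L' r. \<not> below p (ell' r))
       \<and> (\<forall>p\<in>R (r - 1). \<not> above p (ell (r - 1)))
       \<and> (\<forall>p\<in>R' r. \<not> above p (ell' r))"
proof -
  obtain n where "r = Suc (Suc n)"
    using assms by (metis add_2_eq_Suc le_Suc_ex)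
  then show ?thesis
    using R_Suc_above_ell L_Suc_below_ell' L_not_below_ell L'_not_below_ell'
      R_not_above_ell R'_not_above_ell'
    by simp
qed

end
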